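(* For each integer $N\ge 1$, let $A_N^{\mathrm{quant}}$ be the $N\times N$ real matrix with entries \[ (A_N^{\mathrm{quant}})_{m,n} = \frac{\sin \frac{\pi}{N}}{\sin \frac{\pi}{N}(m-n)} \quad (m\neq n), \qquad (A_N^{\mathrm{quant}})_{m,m}=0, \] $m,n=1,\dots,N$. Then the set of eigenvalues of $A_N^{\mathrm{quant}}$ is \[ \left\{ \pm 2i \left(\sin \tfrac{\pi}{N}\right)\left(k-\tfrac12\right) \;\middle|\; k=1,\dots,\tfrac{N}{2}\right\} \quad\text{if $N$ is even}, \] and \[ \{0\}\cup\left\{ \pm 2i \left(\sin \tfrac{\pi}{N}\right) k \;\middle|\; k=1,\dots,\tfrac{N-1}{2}\right\} \quad\text{if $N$ is odd}. \] *)

theory Defs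
  imports Complex_Main "Jordan_Normal_Form.Char_Poly"
begin

text \<open>The N x N matrix A_N^quant; rows/columns indexed 0..N-1 (shift of 1..N,
  which does not affect the differences m - n).\<close>
definition A_quant :: "nat \<Rightarrow> real mat" where
  "A_quant N = mat N N (\<lambda>(m, n). if m = n then 0
      else sin (pi / real N) / sin (pi / real N * (real m - real n)))"

end

theory Submission
  imports Defs
begin

text \<open>
  \<open>A_quant N\<close> is a Toeplitz matrix whose symbol \<open>c t = sin (pi/N) / sin (pi t/N)\<close> is
  antiperiodic, \<open>c (t + N) = - c t\<close>, i.e. a skew-circulant matrix. Such matrices are
  diagonalised by the vectors \<open>(\<zeta>\<^sup>n)\<^sub>n\<close>, \<open>\<zeta>\<close> running through the \<open>N\<close>-th roots of \<open>-1\<close>, with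
  eigenvalue \<open>\<Sum>\<^sub>d c (-d) \<zeta>\<^sup>d\<close>; for this symbol the sum is \<open>i sin (pi/N) (2k + 1 - N)\<close>, by
  symmetry for the real part and the Dirichlet kernel for the imaginary part. The transpose is
  again skew-circulant, so the same vectors are left eigenvectors, and since they form a basis
  (discrete Fourier inversion) no other eigenvalue can occur.
\<close>

lemma sum_lessThan_periodic_shift:
  fixes F :: "int \<Rightarrow> 'a::comm_monoid_add"
  assumes periodic: "\<And>t. F (t + int N) = F t"
  shows "(\<Sum>n<N. F (int n - int m)) = (\<Sum>n<N. F (int n))"
proof (induction m)
  case (Suc m)
  show ?case
  proof (cases N)
    case (Suc M)
    have "(\<Sum>n<N. F (int n - int (Suc m))) = F (- int (Suc m)) + (\<Sum>n<M. F (int n - int m))"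
      unfolding Suc by (subst sum.lessThan_Suc_shift) simp
    also have "F (- int (Suc m)) = F (int M - int m)"
      using periodic[of "- int (Suc m)"] Suc by (simp add: algebra_simps)
    also have "F (int M - int m) + (\<Sum>n<M. F (int n - int m)) = (\<Sum>n<N. F (int n - int m))"
      unfolding Suc by (simp add: add.commute)
    finally show ?thesis using Suc.IH by simp
  qed simp
qed simp

lemma sum_lessThan_periodic_reflect:
  fixes F :: "int \<Rightarrow> 'a::comm_monoid_add"
  assumes "\<And>t. F (t + int N) = F t"
  shows "(\<Sum>n<N. F (- int n)) = (\<Sum>n<N. F (int n))"
proof -
  have "(\<Sum>n<N. F (- int n)) = (\<Sum>i<N. F (int (N - Suc i) - int (N - 1)))"
    by (intro sum.cong refl) (auto simp: of_nat_diff)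
  also have "\<dots> = (\<Sum>n<N. F (int n - int (N - 1)))"
    by (rule sum.nat_diff_reindex)
  also have "\<dots> = (\<Sum>n<N. F (int n))"
    using assms by (rule sum_lessThan_periodic_shift)
  finally show ?thesis .
qed

lemma sum_powers_root_of_unity:
  assumes "N > 0"
  shows "(\<Sum>k<N. cis (2 * pi * real j / real N) ^ k) = (if N dvd j then of_nat N else 0)"
proof (cases "N dvd j")
  case True
  then obtain q where "j = N * q" by auto
  then have "2 * pi * real j / real N = 2 * pi * real q" using assms by simp
  then have "cis (2 * pi * real j / real N) = 1" by (simp add: cis_multiple_2pi)
  then show ?thesis using True by simp
next
  case False
  have "cis (2 * pi * real j / real N) \<noteq> 1"
  proof
    assume "cis (2 * pi * real j / real N) = 1"
    then have "cos (2 * pi * real j / real N) = 1" by (metis cis.sel(1) one_complex.sel(1))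
    then obtain z :: int where "2 * pi * real j / real N = real_of_int z * 2 * pi"
      by (auto simp: cos_one_2pi_int)
    then have "int j = z * int N"
      using assms by (simp add: field_simps) (metis of_int_eq_iff of_int_mult of_int_of_nat_eq)
    then show False using False by (metis dvd_triv_right int_dvd_int_iff)
  qed
  moreover have "cis (2 * pi * real j / real N) ^ N = 1"
    using assms by (simp add: DeMoivre cis_multiple_2pi)
  ultimately show ?thesis using False by (simp add: sum_gp_strict)
qed

lemma sum_cos_2pi_multiples:
  assumes "0 < j" "j < N"
  shows "(\<Sum>d<N. cos (2 * pi * real j * real d / real N)) = 0"
proof -
  have "(\<Sum>d<N. cos (2 * pi * real j * real d / real N)) = Re (\<Sum>d<N. cis (2 * pi * real j / real N) ^ d)"
    by (simp add: Re_sum DeMoivre mult.commute)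
  also have "\<dots> = 0"
    using assms by (subst sum_powers_root_of_unity) (auto dest: dvd_imp_le)
  finally show ?thesis .
qed

lemma sin_odd_multiple_div_sin:
  assumes "sin y \<noteq> 0"
  shows "sin (real (2 * k + 1) * y) / sin y = 1 + 2 * (\<Sum>j=1..k. cos (real (2 * j) * y))"
proof (induction k)
  case (Suc k)
  define a where "a = real (2 * Suc k) * y"
  have angles: "real (2 * Suc k + 1) * y = a + y" "real (2 * k + 1) * y = a - y"
    by (simp_all add: a_def algebra_simps)
  have "sin (real (2 * Suc k + 1) * y) / sin y
      = sin (real (2 * k + 1) * y) / sin y + 2 * cos (real (2 * Suc k) * y)"
    unfolding angles a_def[symmetric] using assms by (simp add: sin_add sin_diff field_simps)
  then show ?case using Suc.IH by simp
qed (use assms in simp)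

lemma sum_sin_odd_multiple_div_sin:
  assumes "k < N"
  shows "(\<Sum>d<N. sin (real (2 * k + 1) * (pi / real N * real d)) / sin (pi / real N * real d))
           = real N - 1 - 2 * real k"
proof -
  define x where "x = pi / real N"
  have "x > 0" using assms by (simp add: x_def)
  have sin_nonzero: "sin (x * real d) \<noteq> 0" if "d \<in> {1..<N}" for d
  proof -
    have "x * real d < x * real N" using that \<open>x > 0\<close> by simp
    also have "x * real N = pi" using assms by (simp add: x_def)
    finally have "0 < sin (x * real d)"
      using that by (intro sin_gt_zero) (simp_all add: x_def)
    then show ?thesis by simp
  qed
  have cos_sum: "(\<Sum>d\<in>{1..<N}. cos (real (2 * j) * (x * real d))) = -1" if "j \<in> {1..k}" for j
  proof -
    have "(\<Sum>d<N. cos (2 * pi * real j * real d / real N)) = 0"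
      using that assms by (intro sum_cos_2pi_multiples) auto
    moreover have "{..<N} = insert 0 {1..<N}" using assms by auto
    ultimately show ?thesis by (simp add: x_def field_simps)
  qed
  have "(\<Sum>d<N. sin (real (2 * k + 1) * (x * real d)) / sin (x * real d))
      = (\<Sum>d\<in>{1..<N}. sin (real (2 * k + 1) * (x * real d)) / sin (x * real d))"
    by (rule sum.mono_neutral_right) (auto simp: not_less_eq_eq)
  also have "\<dots> = (\<Sum>d\<in>{1..<N}. 1 + 2 * (\<Sum>j=1..k. cos (real (2 * j) * (x * real d))))"
    using sin_nonzero by (intro sum.cong refl sin_odd_multiple_div_sin)
  also have "\<dots> = real N - 1 + 2 * (\<Sum>d\<in>{1..<N}. \<Sum>j=1..k. cos (real (2 * j) * (x * real d)))"
    using assms by (simp add: sum.distrib sum_distrib_left of_nat_diff)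
  also have "\<dots> = real N - 1 + 2 * (\<Sum>j=1..k. \<Sum>d\<in>{1..<N}. cos (real (2 * j) * (x * real d)))"
    by (subst sum.swap) (rule refl)
  also have "\<dots> = real N - 1 - 2 * real k"
    using cos_sum by simp
  finally show ?thesis by (simp add: x_def)
qed

lemma cis_add_odd_multiple_pi: "cis (u + real (2 * k + 1) * pi) = - cis u"
proof -
  have "cis (real (2 * k + 1) * pi) = -1"
    by (simp only: DeMoivre[symmetric] cis_pi) simp
  then show ?thesis by (simp add: cis_mult[symmetric])
qed

lemma sum_cis_odd_multiple_div_sin:
  assumes "k < N"
  shows "(\<Sum>d<N. cis (real (2 * k + 1) * (pi / real N * real d)) / of_real (sin (pi / real N * real d)))
           = \<i> * of_real (real N - 1 - 2 * real k)"
proof -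
  define G where "G t = cis (real (2 * k + 1) * (pi / real N * of_int t))
                          / of_real (sin (pi / real N * of_int t))" for t :: int
  have "N > 0" using assms by simp
  have "G (t + int N) = G t" for t
  proof -
    have shift: "pi / real N * of_int (t + int N) = pi / real N * of_int t + pi"
      using \<open>N > 0\<close> by (simp add: field_simps)
    show ?thesis
      unfolding G_def shift distrib_left cis_add_odd_multiple_pi sin_periodic_pi by simp
  qed
  then have "(\<Sum>d<N. G (- int d)) = (\<Sum>d<N. G (int d))"
    by (rule sum_lessThan_periodic_reflect)
  moreover have "G (- t) = - cnj (G t)" for t
    by (simp add: G_def cis_cnj)
  ultimately have "(\<Sum>d<N. G (int d)) = - cnj (\<Sum>d<N. G (int d))"
    by (simp add: sum_negf cnj_sum)
  then have "Re (\<Sum>d<N. G (int d)) = 0"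
    by (simp add: complex_eq_iff)
  moreover have "Im (\<Sum>d<N. G (int d)) = real N - 1 - 2 * real k"
    using sum_sin_odd_multiple_div_sin[OF assms] by (simp add: G_def Im_sum)
  ultimately show ?thesis
    by (simp add: G_def complex_eq_iff)
qed

lemma eigenvalue_imp_left_eigenvalue:
  fixes A :: "'a::idom mat"
  assumes A: "A \<in> carrier_mat n n"
    and left_eigen: "\<And>k. k \<in> K \<Longrightarrow> w k \<in> carrier_vec n \<and> transpose_mat A *\<^sub>v w k = \<mu> k \<cdot>\<^sub>v w k"
    and spanning: "\<And>v. v \<in> carrier_vec n \<Longrightarrow> \<forall>k\<in>K. w k \<bullet> v = 0 \<Longrightarrow> v = 0\<^sub>v n"
    and "eigenvalue A z"
  shows "\<exists>k\<in>K. z = \<mu> k"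
proof -
  obtain v where v: "v \<in> carrier_vec n" "v \<noteq> 0\<^sub>v n" and Av: "A *\<^sub>v v = z \<cdot>\<^sub>v v"
    using \<open>eigenvalue A z\<close> A unfolding eigenvalue_def eigenvector_def by auto
  obtain k where k: "k \<in> K" and nonzero: "w k \<bullet> v \<noteq> 0"
    using spanning v by blast
  have w: "w k \<in> carrier_vec n" and wA: "transpose_mat A *\<^sub>v w k = \<mu> k \<cdot>\<^sub>v w k"
    using left_eigen k by auto
  have "z * (w k \<bullet> v) = w k \<bullet> (A *\<^sub>v v)"
    using v w by (simp add: Av)
  also have "\<dots> = (transpose_mat A *\<^sub>v w k) \<bullet> v"
    using transpose_vec_mult_scalar[OF A v(1) w] by simp
  also have "\<dots> = \<mu> k * (w k \<bullet> v)"
    using v w by (simp add: wA)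
  finally show ?thesis using k nonzero by auto
qed

lemma add_diff_dvd_iff_eq:
  fixes n m N :: nat
  assumes "n < N" "m < N"
  shows "N dvd n + N - m \<longleftrightarrow> n = m"
proof
  assume "N dvd n + N - m"
  then obtain q where q: "n + N - m = N * q" by (rule dvdE)
  have "0 < N * q" "N * q < N * 2" using q assms by linarith+
  then have "q = 1" by simp
  then show "n = m" using q assms by simp
qed simp

lemma dft_eq_zero_imp_zero:
  fixes x :: "nat \<Rightarrow> complex"
  assumes dft: "\<And>k. k < N \<Longrightarrow> (\<Sum>n<N. cis (2 * pi * real k * real n / real N) * x n) = 0"
    and "m < N"
  shows "x m = 0"
proof -
  have "N > 0" using \<open>m < N\<close> by simp
  \<comment> \<open>inverse transform, with \<open>\<omega>^(k(N - m))\<close> standing for \<open>\<omega>^(-km)\<close>, \<open>\<omega> = cis (2\<pi>/N)\<close>\<close>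
  have "0 = (\<Sum>k<N. cis (2 * pi * real k * real (N - m) / real N)
                    * (\<Sum>n<N. cis (2 * pi * real k * real n / real N) * x n))"
    using dft by simp
  also have "\<dots> = (\<Sum>n<N. x n * (\<Sum>k<N. cis (2 * pi * real (n + N - m) / real N) ^ k))"
  proof -
    have "cis (2 * pi * real k * real (N - m) / real N) * cis (2 * pi * real k * real n / real N)
            = cis (2 * pi * real (n + N - m) / real N) ^ k" for k n
      using \<open>m < N\<close> by (simp add: cis_mult DeMoivre of_nat_diff field_simps)
    then show ?thesis
      by (simp add: sum_distrib_left algebra_simps, subst sum.swap) (simp add: mult.left_commute)
  qed
  also have "\<dots> = (\<Sum>n<N. if n = m then of_nat N * x m else 0)"
    using \<open>m < N\<close> \<open>N > 0\<close>
    by (intro sum.cong refl, subst sum_powers_root_of_unity) (simp_all add: add_diff_dvd_iff_eq)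
  also have "\<dots> = of_nat N * x m"
    using \<open>m < N\<close> by simp
  finally show ?thesis using \<open>N > 0\<close> by simp
qed

definition toeplitz_mat :: "nat \<Rightarrow> (int \<Rightarrow> 'a) \<Rightarrow> 'a mat" where
  "toeplitz_mat N c = mat N N (\<lambda>(m, n). c (int m - int n))"

lemma toeplitz_mat_carrier [simp]: "toeplitz_mat N c \<in> carrier_mat N N"
  by (simp add: toeplitz_mat_def)

lemma transpose_toeplitz_mat: "transpose_mat (toeplitz_mat N c) = toeplitz_mat N (\<lambda>t. c (- t))"
  by (rule eq_matI) (simp_all add: toeplitz_mat_def)

lemma toeplitz_mat_mult_vec_index:
  assumes "m < N" "v \<in> carrier_vec N"
  shows "(toeplitz_mat N c *\<^sub>v v) $ m = (\<Sum>n<N. c (int m - int n) * v $ n)"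
  using assms by (simp add: toeplitz_mat_def scalar_prod_def atLeast0LessThan)

text \<open>Entry \<open>n\<close> is \<open>\<zeta>\<^sup>n\<close> for the \<open>N\<close>-th root \<open>\<zeta> = cis ((2k+1)\<pi>/N)\<close> of \<open>-1\<close>.\<close>
definition odd_fourier_vec :: "nat \<Rightarrow> nat \<Rightarrow> complex vec" where
  "odd_fourier_vec N k = vec N (\<lambda>n. cis (real (2 * k + 1) * (pi / real N * real n)))"

lemma odd_fourier_vec_carrier [simp]: "odd_fourier_vec N k \<in> carrier_vec N"
  by (simp add: odd_fourier_vec_def)

lemma odd_fourier_vec_nonzero:
  assumes "N > 0"
  shows "odd_fourier_vec N k \<noteq> 0\<^sub>v N"
proof
  assume "odd_fourier_vec N k = 0\<^sub>v N"
  then have "odd_fourier_vec N k $ 0 = 0\<^sub>v N $ 0" by simp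
  then show False using assms by (simp add: odd_fourier_vec_def)
qed

lemma antiperiodic_toeplitz_mat_mult_odd_fourier_vec:
  fixes c :: "int \<Rightarrow> complex"
  assumes antiperiodic: "\<And>t. c (t + int N) = - c t"
  shows "toeplitz_mat N c *\<^sub>v odd_fourier_vec N k
           = (\<Sum>d<N. c (- int d) * cis (real (2 * k + 1) * (pi / real N * real d))) \<cdot>\<^sub>v odd_fourier_vec N k"
proof (rule eq_vecI)
  define \<theta> where "\<theta> = real (2 * k + 1) * (pi / real N)"
  have angle: "real (2 * k + 1) * (pi / real N * x) = \<theta> * x" for x
    by (simp add: \<theta>_def)
  define H where "H t = c (- t) * cis (\<theta> * of_int t)" for t
  fix m assume "m < dim_vec ((\<Sum>d<N. c (- int d) * cis (real (2 * k + 1) * (pi / real N * real d)))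
                               \<cdot>\<^sub>v odd_fourier_vec N k)"
  then have "m < N" by (simp add: odd_fourier_vec_def)
  have "H (t + int N) = H t" for t
  proof -
    have shift: "\<theta> * of_int (t + int N) = \<theta> * of_int t + real (2 * k + 1) * pi"
      using \<open>m < N\<close> by (simp add: \<theta>_def field_simps)
    show ?thesis
      unfolding H_def shift cis_add_odd_multiple_pi using antiperiodic[of "- t - int N"] by simp
  qed
  then have periodic_sum: "(\<Sum>n<N. H (int n - int m)) = (\<Sum>n<N. H (int n))"
    by (rule sum_lessThan_periodic_shift)
  have "(toeplitz_mat N c *\<^sub>v odd_fourier_vec N k) $ m = (\<Sum>n<N. c (int m - int n) * cis (\<theta> * real n))"
    unfolding odd_fourier_vec_def angle using \<open>m < N\<close> by (simp add: toeplitz_mat_mult_vec_index)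
  also have "\<dots> = (\<Sum>n<N. cis (\<theta> * real m) * H (int n - int m))"
  proof (intro sum.cong refl)
    fix n
    have "cis (\<theta> * real m) * H (int n - int m)
            = c (int m - int n) * (cis (\<theta> * real m) * cis (\<theta> * (real n - real m)))"
      by (simp add: H_def)
    also have "\<dots> = c (int m - int n) * cis (\<theta> * real n)"
      by (simp add: cis_mult right_diff_distrib)
    finally show "c (int m - int n) * cis (\<theta> * real n) = cis (\<theta> * real m) * H (int n - int m)" ..
  qed
  also have "\<dots> = cis (\<theta> * real m) * (\<Sum>d<N. H (int d))"
    by (simp add: sum_distrib_left[symmetric] periodic_sum)
  also have "\<dots> = ((\<Sum>d<N. c (- int d) * cis (real (2 * k + 1) * (pi / real N * real d))) \<cdot>\<^sub>v odd_fourier_vec N k) $ m"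
    unfolding odd_fourier_vec_def angle using \<open>m < N\<close> by (simp add: H_def)
  finally show "(toeplitz_mat N c *\<^sub>v odd_fourier_vec N k) $ m = \<dots>" .
qed (simp add: toeplitz_mat_def odd_fourier_vec_def)

lemma odd_fourier_vecs_spanning:
  assumes v: "v \<in> carrier_vec N" and orth: "\<And>k. k < N \<Longrightarrow> odd_fourier_vec N k \<bullet> v = 0"
  shows "v = 0\<^sub>v N"
proof (rule eq_vecI)
  fix m assume "m < dim_vec (0\<^sub>v N :: complex vec)"
  then have "m < N" by simp
  have split: "cis (real (2 * k + 1) * (pi / real N * real n))
      = cis (2 * pi * real k * real n / real N) * cis (pi / real N * real n)" for k n
    unfolding cis_mult using \<open>m < N\<close> by (simp add: field_simps)
  have dft: "odd_fourier_vec N k \<bullet> v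
      = (\<Sum>n<N. cis (2 * pi * real k * real n / real N) * (cis (pi / real N * real n) * v $ n))" for k
    unfolding odd_fourier_vec_def split using v by (simp add: scalar_prod_def atLeast0LessThan mult.assoc)
  have "cis (pi / real N * real m) * v $ m = 0"
    by (rule dft_eq_zero_imp_zero[OF _ \<open>m < N\<close>]) (metis orth dft)
  then show "v $ m = 0\<^sub>v N $ m" using \<open>m < N\<close> by simp
qed (use v in simp)

definition quant_kernel :: "nat \<Rightarrow> int \<Rightarrow> complex" where
  "quant_kernel N t = of_real (sin (pi / real N) / sin (pi / real N * of_int t))"

text \<open>The zero diagonal of \<open>A_quant\<close> is the junk value \<open>sin (pi / N) / sin 0 = 0\<close>.\<close>
lemma A_quant_eq_toeplitz_mat: "map_mat complex_of_real (A_quant N) = toeplitz_mat N (quant_kernel N)"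
  by (rule eq_matI) (auto simp: A_quant_def toeplitz_mat_def quant_kernel_def)

lemma quant_kernel_antiperiodic:
  assumes "N > 0"
  shows "quant_kernel N (t + int N) = - quant_kernel N t"
proof -
  have "pi / real N * of_int (t + int N) = pi / real N * of_int t + pi"
    using assms by (simp add: field_simps)
  then show ?thesis by (simp add: quant_kernel_def sin_periodic_pi)
qed

lemma quant_kernel_minus: "quant_kernel N (- t) = - quant_kernel N t"
  by (simp add: quant_kernel_def)

lemma sum_quant_kernel_cis:
  assumes "k < N"
  shows "(\<Sum>d<N. quant_kernel N (int d) * cis (real (2 * k + 1) * (pi / real N * real d)))
           = \<i> * of_real (sin (pi / real N) * (real N - 1 - 2 * real k))"
proof -
  have "(\<Sum>d<N. quant_kernel N (int d) * cis (real (2 * k + 1) * (pi / real N * real d)))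
      = of_real (sin (pi / real N))
        * (\<Sum>d<N. cis (real (2 * k + 1) * (pi / real N * real d)) / of_real (sin (pi / real N * real d)))"
    by (simp add: quant_kernel_def sum_distrib_left)
  also have "\<dots> = \<i> * of_real (sin (pi / real N) * (real N - 1 - 2 * real k))"
    unfolding sum_cis_odd_multiple_div_sin[OF assms] by simp
  finally show ?thesis .
qed

lemma A_quant_mult_odd_fourier_vec:
  assumes "k < N"
  shows "map_mat complex_of_real (A_quant N) *\<^sub>v odd_fourier_vec N k
           = (\<i> * of_real (sin (pi / real N) * (2 * real k + 1 - real N))) \<cdot>\<^sub>v odd_fourier_vec N k"
proof -
  have "N > 0" using assms by simp
  have sum_eq: "(\<Sum>d<N. quant_kernel N (- int d) * cis (real (2 * k + 1) * (pi / real N * real d)))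
      = \<i> * of_real (sin (pi / real N) * (2 * real k + 1 - real N))"
    using sum_quant_kernel_cis[OF assms] by (simp add: quant_kernel_minus sum_negf algebra_simps)
  show ?thesis
    unfolding A_quant_eq_toeplitz_mat sum_eq[symmetric]
    by (rule antiperiodic_toeplitz_mat_mult_odd_fourier_vec[where c = "quant_kernel N",
          OF quant_kernel_antiperiodic[OF \<open>N > 0\<close>]])
qed

lemma transpose_A_quant_mult_odd_fourier_vec:
  assumes "k < N"
  shows "transpose_mat (map_mat complex_of_real (A_quant N)) *\<^sub>v odd_fourier_vec N k
           = (\<i> * of_real (sin (pi / real N) * (real N - 1 - 2 * real k))) \<cdot>\<^sub>v odd_fourier_vec N k"
proof -
  have "N > 0" using assms by simp
  have antiperiodic: "quant_kernel N (- (t + int N)) = - quant_kernel N (- t)" for t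
    by (simp only: quant_kernel_minus quant_kernel_antiperiodic[OF \<open>N > 0\<close>])
  show ?thesis
    unfolding A_quant_eq_toeplitz_mat transpose_toeplitz_mat
      antiperiodic_toeplitz_mat_mult_odd_fourier_vec[where c = "\<lambda>t. quant_kernel N (- t)", OF antiperiodic]
      minus_minus sum_quant_kernel_cis[OF assms] by (rule refl)
qed

lemma eigenvalue_A_quant_iff:
  assumes "N > 0"
  shows "eigenvalue (map_mat complex_of_real (A_quant N)) z
           \<longleftrightarrow> (\<exists>k<N. z = \<i> * of_real (sin (pi / real N) * (2 * real k + 1 - real N)))"
    (is "eigenvalue ?A z \<longleftrightarrow> (\<exists>k<N. z = ?ev k)")
proof
  assume z_eigenvalue: "eigenvalue ?A z"
  have "?A \<in> carrier_mat N N"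
    by (simp add: A_quant_eq_toeplitz_mat)
  moreover have "odd_fourier_vec N k \<in> carrier_vec N \<and> transpose_mat ?A *\<^sub>v odd_fourier_vec N k
      = (\<i> * of_real (sin (pi / real N) * (real N - 1 - 2 * real k))) \<cdot>\<^sub>v odd_fourier_vec N k"
    if "k \<in> {..<N}" for k
    using that by (simp add: transpose_A_quant_mult_odd_fourier_vec)
  moreover have "v = 0\<^sub>v N" if "v \<in> carrier_vec N" "\<forall>k\<in>{..<N}. odd_fourier_vec N k \<bullet> v = 0" for v
    using that by (simp add: odd_fourier_vecs_spanning)
  ultimately have "\<exists>k\<in>{..<N}. z = \<i> * of_real (sin (pi / real N) * (real N - 1 - 2 * real k))"
    using z_eigenvalue by (rule eigenvalue_imp_left_eigenvalue)
  then obtain k where "k < N" and z: "z = \<i> * of_real (sin (pi / real N) * (real N - 1 - 2 * real k))"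
    by blast
  have "z = ?ev (N - 1 - k)"
    using \<open>k < N\<close> by (simp add: z of_nat_diff algebra_simps)
  then show "\<exists>k<N. z = ?ev k"
    using \<open>k < N\<close> by (intro exI[of _ "N - 1 - k"]) simp
next
  assume "\<exists>k<N. z = ?ev k"
  then obtain k where "k < N" and z: "z = ?ev k"
    by blast
  have "dim_row ?A = N"
    by (simp add: A_quant_def)
  then have "eigenvector ?A (odd_fourier_vec N k) z"
    unfolding eigenvector_def z
    using A_quant_mult_odd_fourier_vec[OF \<open>k < N\<close>] odd_fourier_vec_nonzero[OF assms] by simp
  then show "eigenvalue ?A z"
    unfolding eigenvalue_def by blast
qed

lemma centred_odd_progression_even:
  fixes c :: real
  assumes "even N"
  shows "{\<i> * of_real (c * (2 * real k + 1 - real N)) | k. k < N}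
           = {s * 2 * \<i> * of_real (c * (real k - 1/2)) | s k. s \<in> {1, -1::complex} \<and> k \<in> {1..N div 2}}"
    (is "?L = ?R")
proof -
  define q where "q = N div 2"
  have N: "N = 2 * q" using assms by (simp add: q_def)
  show ?thesis
  proof (rule Set.set_eqI, rule iffI)
    fix z assume "z \<in> ?L"
    then obtain k where "k < N" and z: "z = \<i> * of_real (c * (2 * real k + 1 - real N))"
      by blast
    show "z \<in> ?R"
    proof (cases "q \<le> k")
      case True
      then have "z = 1 * 2 * \<i> * of_real (c * (real (k - q + 1) - 1/2))"
        by (simp add: z N of_nat_diff algebra_simps)
      moreover have "k - q + 1 \<in> {1..N div 2}" using True \<open>k < N\<close> N by auto
      ultimately show ?thesis by blast
    next
      case False
      then have "z = -1 * 2 * \<i> * of_real (c * (real (q - k) - 1/2))"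
        by (simp add: z N of_nat_diff algebra_simps)
      moreover have "q - k \<in> {1..N div 2}" using False N by auto
      ultimately show ?thesis by blast
    qed
  next
    fix z assume "z \<in> ?R"
    then obtain s k where s: "s \<in> {1, -1}" and k: "k \<in> {1..q}"
      and z: "z = s * 2 * \<i> * of_real (c * (real k - 1/2))"
      by (auto simp: q_def)
    from s consider "s = 1" | "s = -1" by blast
    then show "z \<in> ?L"
    proof cases
      case 1
      then have "z = \<i> * of_real (c * (2 * real (q + k - 1) + 1 - real N))"
        using k by (simp add: z N of_nat_diff algebra_simps)
      moreover have "q + k - 1 < N" using k N by auto
      ultimately show ?thesis by blast
    next
      case 2
      then have "z = \<i> * of_real (c * (2 * real (q - k) + 1 - real N))"
        using k by (simp add: z N of_nat_diff algebra_simps)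
      moreover have "q - k < N" using k N by auto
      ultimately show ?thesis by blast
    qed
  qed
qed

lemma centred_even_progression_odd:
  fixes c :: real
  assumes "odd N"
  shows "{\<i> * of_real (c * (2 * real k + 1 - real N)) | k. k < N}
           = {0} \<union> {s * 2 * \<i> * of_real (c * real k) | s k. s \<in> {1, -1::complex} \<and> k \<in> {1..(N - 1) div 2}}"
    (is "?L = ?R")
proof -
  define q where "q = (N - 1) div 2"
  have N: "N = 2 * q + 1" using assms by (simp add: q_def)
  show ?thesis
  proof (rule Set.set_eqI, rule iffI)
    fix z assume "z \<in> ?L"
    then obtain k where "k < N" and z: "z = \<i> * of_real (c * (2 * real k + 1 - real N))"
      by blast
    consider "q < k" | "k = q" | "k < q" by linarith
    then show "z \<in> ?R"
    proof cases
      case 1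
      then have "z = 1 * 2 * \<i> * of_real (c * real (k - q))"
        by (simp add: z N of_nat_diff algebra_simps)
      moreover have "k - q \<in> {1..(N - 1) div 2}" using 1 \<open>k < N\<close> N by auto
      ultimately show ?thesis by blast
    next
      case 2
      then show ?thesis by (simp add: z N)
    next
      case 3
      then have "z = -1 * 2 * \<i> * of_real (c * real (q - k))"
        by (simp add: z N of_nat_diff algebra_simps)
      moreover have "q - k \<in> {1..(N - 1) div 2}" using 3 N by auto
      ultimately show ?thesis by blast
    qed
  next
    fix z assume "z \<in> ?R"
    show "z \<in> ?L"
    proof (cases "z = 0")
      case True
      then have "z = \<i> * of_real (c * (2 * real q + 1 - real N))" by (simp add: N)
      then show ?thesis using N by auto
    next
      case False
      with \<open>z \<in> ?R\<close> obtain s k where s: "s \<in> {1, -1}" and k: "k \<in> {1..q}"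
        and z: "z = s * 2 * \<i> * of_real (c * real k)"
        by (auto simp: q_def)
      from s consider "s = 1" | "s = -1" by blast
      then show ?thesis
      proof cases
        case 1
        then have "z = \<i> * of_real (c * (2 * real (q + k) + 1 - real N))"
          by (simp add: z N algebra_simps)
        moreover have "q + k < N" using k N by auto
        ultimately show ?thesis by blast
      next
        case 2
        then have "z = \<i> * of_real (c * (2 * real (q - k) + 1 - real N))"
          using k by (simp add: z N of_nat_diff algebra_simps)
        moreover have "q - k < N" using k N by auto
        ultimately show ?thesis by blast
      qed
    qed
  qed
qed

theorem theorem4:
  fixes N :: nat
  assumes "N \<ge> 1"
  shows "{z. eigenvalue (map_mat complex_of_real (A_quant N)) z} =
    (if even N then
       {s * 2 * \<i> * complex_of_real (sin (pi / real N) * (real k - 1/2)) | s k.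
          s \<in> {1, -1::complex} \<and> k \<in> {1..N div 2}}
     else
       {0} \<union> {s * 2 * \<i> * complex_of_real (sin (pi / real N) * real k) | s k.
          s \<in> {1, -1::complex} \<and> k \<in> {1..(N - 1) div 2}})"
proof -
  have eigenvalues: "{z. eigenvalue (map_mat complex_of_real (A_quant N)) z}
          = {\<i> * of_real (sin (pi / real N) * (2 * real k + 1 - real N)) | k. k < N}"
    using assms by (auto simp: eigenvalue_A_quant_iff)
  show ?thesis
  proof (cases "even N")
    case True
    then show ?thesis unfolding eigenvalues centred_odd_progression_even[OF True] by simp
  next
    case False
    then show ?thesis unfolding eigenvalues centred_even_progression_odd[OF False] by simp
  qed
qed

end
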